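(* For integers $r,r^{\star},n$ with $1\le r^{\star}\le r<n$, there exist $X,Z\in\mathbb{R}^{n\times r}$ with $\mathrm{rank}(Z)=r^{\star}$ and $XX^{T}\ne ZZ^{T}$ such that $\delta(X,Z)\le1/(1+1/\sqrt{r-r^{\star}+1})$.
   Context: A linear map $\mathcal{A}:\mathbb{R}^{n\times n}\to\mathbb{R}^{m}$ satisfies $(\delta,p)$-RIP if $0\le\delta<1$ and there is $\nu>0$ such that $(1-\delta)\|E\|_{F}^{2}\le\frac{1}{\nu}\|\mathcal{A}(E)\|^{2}\le(1+\delta)\|E\|_{F}^{2}$ for all $E\in\mathbb{R}^{n\times n}$ with $\mathrm{rank}(E)\le p$. For $X,Z\in\mathbb{R}^{n\times r}$ with $XX^{T}\ne ZZ^{T}$ and $r^{\star}=\mathrm{rank}(Z)$, the threshold RIP function $\delta(X,Z)$ is the infimum of all $\delta$ for which there exist $m\ge1$ and a linear map $\mathcal{A}:\mathbb{R}^{n\times n}\to\mathbb{R}^{m}$ satisfying $(\delta,r+r^{\star})$-RIP such that the function $f_{\mathcal{A}}(U)=\|\mathcal{A}(UU^{T}-ZZ^{T})\|^{2}$ on $\mathbb{R}^{n\times r}$ satisfies $\nabla f_{\mathcal{A}}(X)=0$ and $\nabla^{2}f_{\mathcal{A}}(X)\succeq0$. *)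

theory Defs
  imports Complex_Main "HOL-Library.Extended_Real" "Jordan_Normal_Form.DL_Rank"
begin

definition sqnorm_vec :: "real vec \<Rightarrow> real" where
  "sqnorm_vec v = (\<Sum>i<dim_vec v. (v $ i)^2)"

definition sqfrob :: "real mat \<Rightarrow> real" where
  "sqfrob E = (\<Sum>i<dim_row E. \<Sum>j<dim_col E. (E $$ (i,j))^2)"

definition mrank :: "real mat \<Rightarrow> nat" where
  "mrank A = vec_space.rank (dim_row A) A"

definition linear_meas :: "nat \<Rightarrow> nat \<Rightarrow> (real mat \<Rightarrow> real vec) \<Rightarrow> bool" where
  "linear_meas n m A \<longleftrightarrow>
     (\<forall>E \<in> carrier_mat n n. A E \<in> carrier_vec m) \<and>
     (\<forall>E \<in> carrier_mat n n. \<forall>F \<in> carrier_mat n n. A (E + F) = A E + A F) \<and>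
     (\<forall>E \<in> carrier_mat n n. \<forall>c::real. A (c \<cdot>\<^sub>m E) = c \<cdot>\<^sub>v A E)"

definition RIP :: "nat \<Rightarrow> (real mat \<Rightarrow> real vec) \<Rightarrow> real \<Rightarrow> nat \<Rightarrow> bool" where
  "RIP n A \<delta> p \<longleftrightarrow> 0 \<le> \<delta> \<and> \<delta> < 1 \<and>
     (\<exists>\<nu>>0. \<forall>E \<in> carrier_mat n n. mrank E \<le> p \<longrightarrow>
        (1 - \<delta>) * sqfrob E \<le> sqnorm_vec (A E) / \<nu> \<and>
        sqnorm_vec (A E) / \<nu> \<le> (1 + \<delta>) * sqfrob E)"

definition fA :: "(real mat \<Rightarrow> real vec) \<Rightarrow> real mat \<Rightarrow> real mat \<Rightarrow> real" where
  "fA A Z U = sqnorm_vec (A (U * transpose_mat U - Z * transpose_mat Z))"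

(* second-order critical point of f_A at X on R^{n x r}: gradient zero and Hessian PSD,
   expressed via first and second directional derivatives along every direction V:
   phi' is the derivative of t |-> f(X+tV), phi'(0) = <grad f(X),V> = 0 and
   h = phi''(0) = Hess f(X)[V,V] >= 0 *)
definition sec_order_crit :: "nat \<Rightarrow> nat \<Rightarrow> (real mat \<Rightarrow> real vec) \<Rightarrow> real mat \<Rightarrow> real mat \<Rightarrow> bool" where
  "sec_order_crit n r A Z X \<longleftrightarrow>
     (\<forall>V \<in> carrier_mat n r. \<exists>\<phi>' h.
        (\<forall>t. ((\<lambda>s. fA A Z (X + s \<cdot>\<^sub>m V)) has_real_derivative \<phi>' t) (at t)) \<and>
        \<phi>' 0 = 0 \<and> (\<phi>' has_real_derivative h) (at 0) \<and> 0 \<le> h)"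

(* threshold RIP function delta(X,Z); infimum in the extended reals (Inf {} = \<infinity>) *)
definition thr_delta :: "nat \<Rightarrow> nat \<Rightarrow> real mat \<Rightarrow> real mat \<Rightarrow> ereal" where
  "thr_delta n r X Z = Inf (ereal ` {\<delta>. \<exists>m\<ge>1. \<exists>A. linear_meas n m A \<and>
        RIP n A \<delta> (r + mrank Z) \<and> sec_order_crit n r A Z X})"

end

theory Submission
  imports Defs
begin

(* Put k = r - r* + 1 and delta = sqrt k / (1 + sqrt k). Take X = [I_r; 0] and let Z consist of
   k copies of c e_r, c = sqrt ((1 + sqrt k) / k), followed by e_k, ..., e_(r-1) (indices from 0),
   so that rank Z = r* and E = X X^T - Z Z^T is diagonal with entries 1 at 0, ..., k-1, the entry
   -(1 + sqrt k) at r, and 0 elsewhere.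
   The measurement operator realises the quadratic form
     B(E, E) = (1 + delta) sum_(a ~= b) E_ab^2 + sum_a E_aa^2 + 2 delta tr_k(E) E_rr / sqrt k,
   tr_k being the trace of the leading k x k block. By Cauchy-Schwarz the cross term is at most
   delta (sum_(a < k) E_aa^2 + E_rr^2) in absolute value, so (1 - delta) |E|_F^2 <= B(E, E) <=
   (1 + delta) |E|_F^2 for all E, of any rank. The value 1 + sqrt k makes B(E, Y) = -(1 + delta) Y_rr.
   Along a direction V the first-order term X V^T + V X^T vanishes at (r, r), so the gradient is
   zero, and the negative Hessian contribution 2 B(E, V V^T) = -2 (1 + delta) |row r of V|^2 is
   compensated by the weight 1 + delta that B puts on the entries (r, b) and (b, r) of
   X V^T + V X^T, both equal to V_rb. *)

lemma sum_lessThan_mult: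
  fixes g :: "nat \<Rightarrow> 'a::comm_monoid_add"
  shows "(\<Sum>i<m*n. g i) = (\<Sum>a<m. \<Sum>b<n. g (a*n + b))"
proof -
  have "(\<Sum>i<m*n. g i) = (\<Sum>a<m. sum g {a*n..<a*n + n})"
    by (rule sum.nat_group[symmetric])
  also have "\<dots> = (\<Sum>a<m. \<Sum>b<n. g (a*n + b))"
    using sum.shift_bounds_nat_ivl[of g 0 "a*n" n for a] by (simp add: add.commute lessThan_atLeast0)
  finally show ?thesis .
qed

lemma sum_lessThan_split_diag:
  fixes a n :: nat and g :: "nat \<Rightarrow> 'a::comm_monoid_add"
  assumes "a < n"
  shows "(\<Sum>b<n. g b) = (\<Sum>b<n. if a = b then 0 else g b) + g a"
proof -
  have "(\<Sum>b<n. g b) = g a + (\<Sum>b\<in>{..<n} - {a}. g b)"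
    using assms by (intro sum.remove) auto
  then show ?thesis
    by (simp add: sum.If_cases Diff_eq add.commute)
qed

lemma sum_lessThan_if_less:
  fixes g :: "nat \<Rightarrow> 'a::comm_monoid_add"
  assumes "k \<le> n"
  shows "(\<Sum>a<n. if a < k then g a else 0) = (\<Sum>a<k. g a)"
proof -
  have "{a \<in> {..<n}. a < k} = {..<k}"
    using assms by auto
  then show ?thesis
    using sum.inter_filter[of "{..<n}" g "\<lambda>a. a < k"] by simp
qed

lemma sum_centered_mult:
  fixes x y :: "nat \<Rightarrow> real"
  shows "(\<Sum>a<k. (x a - (\<Sum>b<k. x b) / k) * (y a - (\<Sum>b<k. y b) / k))
    = (\<Sum>a<k. x a * y a) - (\<Sum>a<k. x a) * (\<Sum>a<k. y a) / k"
proof -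
  define Sx Sy where "Sx = (\<Sum>a<k. x a)" and "Sy = (\<Sum>a<k. y a)"
  have "(\<Sum>a<k. (x a - Sx / k) * (y a - Sy / k))
      = (\<Sum>a<k. x a * y a) - (\<Sum>a<k. x a * (Sy / k)) - (\<Sum>a<k. Sx / k * y a)
        + (\<Sum>a<k. Sx / k * (Sy / k))"
    by (simp add: algebra_simps sum.distrib sum_subtractf)
  also have "\<dots> = (\<Sum>a<k. x a * y a) - Sx * (Sy / k) - Sx / k * Sy + k * (Sx / k * (Sy / k))"
    unfolding Sx_def Sy_def sum_distrib_left[symmetric] sum_distrib_right[symmetric] by simp
  also have "\<dots> = (\<Sum>a<k. x a * y a) - Sx * Sy / k"
    by (cases "k = 0") (simp_all add: field_simps)
  finally show ?thesis unfolding Sx_def Sy_def .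
qed

lemma square_sum_div_le_sum_squares:
  fixes x :: "nat \<Rightarrow> real"
  shows "(\<Sum>a<k. x a)\<^sup>2 / k \<le> (\<Sum>a<k. (x a)\<^sup>2)"
proof -
  have "0 \<le> (\<Sum>a<k. (x a - (\<Sum>b<k. x b) / k) * (x a - (\<Sum>b<k. x b) / k))"
    by (intro sum_nonneg) simp
  then show ?thesis
    by (simp add: sum_centered_mult power2_eq_square)
qed

lemma row_col_sum_le_double_sum:
  fixes g :: "nat \<Rightarrow> nat \<Rightarrow> real"
  assumes "r < n" and nonneg: "\<And>a b. 0 \<le> g a b"
  shows "(\<Sum>b<r. g r b) + (\<Sum>a<r. g a r) \<le> (\<Sum>a<n. \<Sum>b<n. g a b)"
proof -
  have "(\<Sum>b<r. g r b) \<le> (\<Sum>b<n. g r b)"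
    using \<open>r < n\<close> nonneg by (intro sum_mono2) auto
  moreover have "(\<Sum>a<r. g a r) \<le> (\<Sum>a\<in>{..<n} - {r}. g a r)"
    using \<open>r < n\<close> nonneg by (intro sum_mono2) auto
  moreover have "(\<Sum>a\<in>{..<n} - {r}. g a r) \<le> (\<Sum>a\<in>{..<n} - {r}. \<Sum>b<n. g a b)"
    using \<open>r < n\<close> nonneg by (intro sum_mono member_le_sum) auto
  moreover have "(\<Sum>a<n. \<Sum>b<n. g a b) = (\<Sum>b<n. g r b) + (\<Sum>a\<in>{..<n} - {r}. \<Sum>b<n. g a b)"
    by (rule sum.remove) (use \<open>r < n\<close> in auto)
  ultimately show ?thesis by linarith
qed

lemma (in vec_space) lin_indpt_private_coords:
  assumes S: "S \<subseteq> carrier_vec n"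
    and coord: "\<And>v. v \<in> S \<Longrightarrow> \<exists>i<n. v $ i \<noteq> 0 \<and> (\<forall>u\<in>S. u \<noteq> v \<longrightarrow> u $ i = 0)"
  shows "lin_indpt S"
proof
  assume "lin_dep S"
  then obtain A a v where A: "finite A" "A \<subseteq> S" and comb: "lincomb a A = 0\<^sub>v n"
    and v: "v \<in> A" "a v \<noteq> 0"
    unfolding lin_dep_def by blast
  obtain i where i: "i < n" "v $ i \<noteq> 0" "\<forall>u\<in>S. u \<noteq> v \<longrightarrow> u $ i = 0"
    using coord v A by blast
  have "lincomb a A $ i = (\<Sum>u\<in>A. a u * u $ i)"
    using A S i(1) by (intro lincomb_index) auto
  also have "\<dots> = (\<Sum>u\<in>A. if u = v then a v * v $ i else 0)"
    using i(3) A by (intro sum.cong) auto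
  also have "\<dots> = a v * v $ i"
    using A v by simp
  finally show False
    using comb i v by simp
qed

lemma (in vec_space) lin_indpt_insert_unit_vecs:
  assumes "c \<noteq> 0" and "j < n" and "I \<subseteq> {..<n}" and "j \<notin> I"
  shows "lin_indpt (insert (c \<cdot>\<^sub>v unit_vec n j) (unit_vec n ` I))"
proof (rule lin_indpt_private_coords)
  show "insert (c \<cdot>\<^sub>v unit_vec n j) (unit_vec n ` I) \<subseteq> carrier_vec n"
    by auto
  fix u assume "u \<in> insert (c \<cdot>\<^sub>v unit_vec n j) (unit_vec n ` I)"
  then consider "u = c \<cdot>\<^sub>v unit_vec n j" | l where "l \<in> I" "u = unit_vec n l"
    by auto
  then show "\<exists>i<n. u $ i \<noteq> 0 \<and> (\<forall>w\<in>insert (c \<cdot>\<^sub>v unit_vec n j) (unit_vec n ` I). w \<noteq> u \<longrightarrow> w $ i = 0)"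
  proof cases
    case 1
    then show ?thesis
      using assms by (intro exI[of _ j]) auto
  next
    case 2
    then show ?thesis
      using assms by (intro exI[of _ l]) (auto simp: unit_vec_def)
  qed
qed

lemma card_insert_unit_vecs:
  fixes c :: "'a::field"
  assumes "c \<noteq> 0" and "j < n" and "I \<subseteq> {..<n}" and "j \<notin> I" and "finite I"
  shows "card (insert (c \<cdot>\<^sub>v unit_vec n j) (unit_vec n ` I)) = card I + 1"
proof -
  have "c \<cdot>\<^sub>v unit_vec n j \<notin> unit_vec n ` I"
  proof
    assume "c \<cdot>\<^sub>v unit_vec n j \<in> unit_vec n ` I"
    then obtain l where "l \<in> I" "c \<cdot>\<^sub>v unit_vec n j = unit_vec n l"
      by auto
    then have "(c \<cdot>\<^sub>v unit_vec n j) $ j = (unit_vec n l :: 'a vec) $ j"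
      by simp
    then show False
      using assms \<open>l \<in> I\<close> by (auto simp: unit_vec_def split: if_splits)
  qed
  moreover have "inj_on (unit_vec n :: nat \<Rightarrow> 'a vec) I"
    using assms by (auto simp: inj_on_def)
  ultimately show ?thesis
    using assms by (simp add: card_image)
qed

lemma sqnorm_vec_eq_scalar_prod: "sqnorm_vec v = v \<bullet> v"
  by (simp add: sqnorm_vec_def scalar_prod_def power2_eq_square lessThan_atLeast0)

lemma residual_along_line:
  fixes X V Z :: "real mat"
  assumes "X \<in> carrier_mat n r" and "V \<in> carrier_mat n r" and "Z \<in> carrier_mat n r"
  shows "(X + s \<cdot>\<^sub>m V) * (X + s \<cdot>\<^sub>m V)\<^sup>T - Z * Z\<^sup>T
    = (X * X\<^sup>T - Z * Z\<^sup>T) + s \<cdot>\<^sub>m (X * V\<^sup>T + V * X\<^sup>T) + s\<^sup>2 \<cdot>\<^sub>m (V * V\<^sup>T)"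
  using assms
  by (intro eq_matI) (auto simp: scalar_prod_def sum.distrib sum_subtractf sum_distrib_left
      algebra_simps power2_eq_square)

lemma linear_meas_quadratic:
  assumes "linear_meas n m A" and "E \<in> carrier_mat n n" "L \<in> carrier_mat n n" "W \<in> carrier_mat n n"
  shows "A (E + s \<cdot>\<^sub>m L + s\<^sup>2 \<cdot>\<^sub>m W) = A E + s \<cdot>\<^sub>v A L + s\<^sup>2 \<cdot>\<^sub>v A W"
  using assms unfolding linear_meas_def by (metis add_carrier_mat smult_carrier_mat)

lemma quartic_path_derivatives:
  fixes a b c :: "nat \<Rightarrow> real" and m :: nat
  defines "\<phi>' \<equiv> \<lambda>t. \<Sum>i<m. 2 * (a i + t * b i + t\<^sup>2 * c i) * (b i + 2 * t * c i)"
  shows "((\<lambda>s. \<Sum>i<m. (a i + s * b i + s\<^sup>2 * c i)\<^sup>2) has_real_derivative \<phi>' t) (at t)"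
    and "(\<phi>' has_real_derivative (\<Sum>i<m. 2 * ((b i)\<^sup>2 + 2 * a i * c i))) (at 0)"
  unfolding \<phi>'_def
  by (auto intro!: DERIV_sum derivative_eq_intros simp: algebra_simps power2_eq_square)

lemma fA_along_line:
  fixes A :: "real mat \<Rightarrow> real vec"
  assumes A: "linear_meas n m A"
    and X: "X \<in> carrier_mat n r" and V: "V \<in> carrier_mat n r" and Z: "Z \<in> carrier_mat n r"
  defines "a \<equiv> A (X * X\<^sup>T - Z * Z\<^sup>T)" and "b \<equiv> A (X * V\<^sup>T + V * X\<^sup>T)" and "c \<equiv> A (V * V\<^sup>T)"
  shows "fA A Z (X + s \<cdot>\<^sub>m V) = (\<Sum>i<m. (a $ i + s * b $ i + s\<^sup>2 * c $ i)\<^sup>2)"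
proof -
  have mats: "X * X\<^sup>T - Z * Z\<^sup>T \<in> carrier_mat n n" "X * V\<^sup>T + V * X\<^sup>T \<in> carrier_mat n n"
    "V * V\<^sup>T \<in> carrier_mat n n"
    using X V Z by auto
  then have "a \<in> carrier_vec m" "b \<in> carrier_vec m" "c \<in> carrier_vec m"
    using A unfolding a_def b_def c_def linear_meas_def by auto
  moreover have "fA A Z (X + s \<cdot>\<^sub>m V) = sqnorm_vec (a + s \<cdot>\<^sub>v b + s\<^sup>2 \<cdot>\<^sub>v c)"
    unfolding fA_def residual_along_line[OF X V Z] a_def b_def c_def
    using linear_meas_quadratic[OF A mats] by simp
  ultimately show ?thesis
    by (simp add: sqnorm_vec_def add.assoc)
qed

lemma sec_order_critI:
  fixes A :: "real mat \<Rightarrow> real vec"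
  assumes A: "linear_meas n m A" and X: "X \<in> carrier_mat n r" and Z: "Z \<in> carrier_mat n r"
    and crit: "\<And>V. V \<in> carrier_mat n r \<Longrightarrow>
      A (X * X\<^sup>T - Z * Z\<^sup>T) \<bullet> A (X * V\<^sup>T + V * X\<^sup>T) = 0 \<and>
      0 \<le> A (X * V\<^sup>T + V * X\<^sup>T) \<bullet> A (X * V\<^sup>T + V * X\<^sup>T)
           + 2 * (A (X * X\<^sup>T - Z * Z\<^sup>T) \<bullet> A (V * V\<^sup>T))"
  shows "sec_order_crit n r A Z X"
  unfolding sec_order_crit_def
proof
  fix V :: "real mat" assume V: "V \<in> carrier_mat n r"
  define a where "a = A (X * X\<^sup>T - Z * Z\<^sup>T)"
  define b where "b = A (X * V\<^sup>T + V * X\<^sup>T)"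
  define c where "c = A (V * V\<^sup>T)"
  have "X * X\<^sup>T - Z * Z\<^sup>T \<in> carrier_mat n n" "X * V\<^sup>T + V * X\<^sup>T \<in> carrier_mat n n"
    "V * V\<^sup>T \<in> carrier_mat n n"
    using X V Z by auto
  then have carrier: "a \<in> carrier_vec m" "b \<in> carrier_vec m" "c \<in> carrier_vec m"
    using A unfolding a_def b_def c_def linear_meas_def by auto
  have path: "(\<lambda>s. fA A Z (X + s \<cdot>\<^sub>m V)) = (\<lambda>s. \<Sum>i<m. (a $ i + s * b $ i + s\<^sup>2 * c $ i)\<^sup>2)"
    unfolding a_def b_def c_def using fA_along_line[OF A X V Z] by (rule ext)
  define \<phi>' where "\<phi>' t = (\<Sum>i<m. 2 * (a $ i + t * b $ i + t\<^sup>2 * c $ i) * (b $ i + 2 * t * c $ i))"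
    for t
  have "a \<bullet> b = 0" and "0 \<le> b \<bullet> b + 2 * (a \<bullet> c)"
    using crit[OF V] unfolding a_def b_def c_def by auto
  then have "\<phi>' 0 = 0" and "0 \<le> (\<Sum>i<m. 2 * ((b $ i)\<^sup>2 + 2 * a $ i * c $ i))"
    using carrier unfolding \<phi>'_def
    by (simp_all add: scalar_prod_def lessThan_atLeast0 sum_distrib_left[symmetric] sum.distrib
        power2_eq_square mult.assoc)
  moreover have "\<forall>t. ((\<lambda>s. fA A Z (X + s \<cdot>\<^sub>m V)) has_real_derivative \<phi>' t) (at t)"
    and "(\<phi>' has_real_derivative (\<Sum>i<m. 2 * ((b $ i)\<^sup>2 + 2 * a $ i * c $ i))) (at 0)"
    unfolding path \<phi>'_def[abs_def]
    using quartic_path_derivatives[of "\<lambda>i. a $ i" "\<lambda>i. b $ i" "\<lambda>i. c $ i" m] by blast+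
  ultimately show "\<exists>\<phi>' h. (\<forall>t. ((\<lambda>s. fA A Z (X + s \<cdot>\<^sub>m V)) has_real_derivative \<phi>' t) (at t)) \<and>
      \<phi>' 0 = 0 \<and> (\<phi>' has_real_derivative h) (at 0) \<and> 0 \<le> h"
    by blast
qed

lemma thr_delta_le:
  assumes "1 \<le> m" and "linear_meas n m A" and "RIP n A \<delta> (r + mrank Z)" and "sec_order_crit n r A Z X"
  shows "thr_delta n r X Z \<le> ereal \<delta>"
  unfolding thr_delta_def using assms by (auto intro!: Inf_lower)

definition rip_delta :: "nat \<Rightarrow> real" where
  "rip_delta k = sqrt k / (1 + sqrt k)"

lemma rip_delta_bounds: "0 \<le> rip_delta k" "rip_delta k < 1"
proof -
  have "0 < 1 + sqrt k"
    by (simp add: add_pos_nonneg)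
  then show "0 \<le> rip_delta k" "rip_delta k < 1"
    by (simp_all add: rip_delta_def divide_less_eq)
qed

definition partial_trace :: "nat \<Rightarrow> real mat \<Rightarrow> real" where
  "partial_trace k E = (\<Sum>a<k. E $$ (a,a))"

lemma partial_trace_add:
  "E \<in> carrier_mat n n \<Longrightarrow> F \<in> carrier_mat n n \<Longrightarrow> k \<le> n \<Longrightarrow>
    partial_trace k (E + F) = partial_trace k E + partial_trace k F"
  by (simp add: partial_trace_def sum.distrib)

lemma partial_trace_smult:
  "E \<in> carrier_mat n n \<Longrightarrow> k \<le> n \<Longrightarrow> partial_trace k (c \<cdot>\<^sub>m E) = c * partial_trace k E"
  by (simp add: partial_trace_def sum_distrib_left)

definition offdiag_inner :: "nat \<Rightarrow> real mat \<Rightarrow> real mat \<Rightarrow> real" where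
  "offdiag_inner n E Y = (\<Sum>a<n. \<Sum>b<n. if a = b then 0 else E $$ (a,b) * Y $$ (a,b))"

definition diag_inner :: "nat \<Rightarrow> real mat \<Rightarrow> real mat \<Rightarrow> real" where
  "diag_inner n E Y = (\<Sum>a<n. E $$ (a,a) * Y $$ (a,a))"

lemma sqfrob_eq_offdiag_diag:
  assumes "E \<in> carrier_mat n n"
  shows "sqfrob E = offdiag_inner n E E + diag_inner n E E"
proof -
  have "(\<Sum>b<n. (E $$ (a,b))\<^sup>2) = (\<Sum>b<n. if a = b then 0 else E $$ (a,b) * E $$ (a,b)) + E $$ (a,a) * E $$ (a,a)"
    if "a < n" for a
    using sum_lessThan_split_diag[OF that] by (simp add: power2_eq_square)
  then show ?thesis
    using assms by (simp add: sqfrob_def offdiag_inner_def diag_inner_def sum.distrib)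
qed

lemma diag_inner_ge:
  assumes "k \<le> r" and "r < n"
  shows "(\<Sum>a<k. (E $$ (a,a))\<^sup>2) + (E $$ (r,r))\<^sup>2 \<le> diag_inner n E E"
proof -
  have "diag_inner n E E = (\<Sum>a<k. (E $$ (a,a))\<^sup>2) + (\<Sum>a\<in>{k..<n}. (E $$ (a,a))\<^sup>2)"
    using sum.atLeastLessThan_concat[of 0 k n "\<lambda>a. (E $$ (a,a))\<^sup>2"] assms
    by (simp add: diag_inner_def lessThan_atLeast0 power2_eq_square)
  moreover have "(E $$ (r,r))\<^sup>2 \<le> (\<Sum>a\<in>{k..<n}. (E $$ (a,a))\<^sup>2)"
    using assms by (intro member_le_sum) auto
  ultimately show ?thesis
    by (simp add: algebra_simps)
qed

definition meas_form :: "nat \<Rightarrow> nat \<Rightarrow> nat \<Rightarrow> real mat \<Rightarrow> real mat \<Rightarrow> real" where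
  "meas_form n k r E Y = (1 + rip_delta k) * offdiag_inner n E Y + diag_inner n E Y
     + rip_delta k * (partial_trace k E * Y $$ (r,r) + E $$ (r,r) * partial_trace k Y) / sqrt k"

definition meas_entry :: "nat \<Rightarrow> nat \<Rightarrow> real mat \<Rightarrow> nat \<Rightarrow> nat \<Rightarrow> real" where
  "meas_entry k r E a b =
     (if a \<noteq> b then sqrt (1 + rip_delta k) * E $$ (a,b)
      else if a < k then E $$ (a,a) - partial_trace k E / k
      else if a = r then 0 else E $$ (a,a))"

(* Entry a*n + b carries E_ab, weighted by sqrt (1 + delta) off the diagonal, except that the
   first k diagonal entries are centred and E_rr is dropped. Centring removes x^2, x = tr_k E / sqrt k,
   from their squared norm; x and y = E_rr go into the last two entries, whose squares add up to
   x^2 + y^2 + 2 delta x y. *)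
definition meas :: "nat \<Rightarrow> nat \<Rightarrow> nat \<Rightarrow> real mat \<Rightarrow> real vec" where
  "meas n k r E = vec (n*n + 2) (\<lambda>i.
     if i < n*n then meas_entry k r E (i div n) (i mod n)
     else if i = n*n then sqrt ((1 + rip_delta k) / 2) * (partial_trace k E / sqrt k + E $$ (r,r))
     else sqrt ((1 - rip_delta k) / 2) * (partial_trace k E / sqrt k - E $$ (r,r)))"

lemma meas_index:
  assumes "a < n" and "b < n"
  shows "meas n k r E $ (a*n + b) = meas_entry k r E a b"
proof -
  have "a*n + b < Suc a * n"
    using assms by simp
  also have "\<dots> \<le> n*n"
    using assms by (intro mult_le_mono1) simp
  finally show ?thesis
    using assms by (simp add: meas_def)
qed

lemma sum_meas_entry_diag:
  assumes "k \<le> r" and "r < n"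
  shows "(\<Sum>a<n. meas_entry k r E a a * meas_entry k r Y a a)
    = diag_inner n E Y - partial_trace k E * partial_trace k Y / k - E $$ (r,r) * Y $$ (r,r)"
proof -
  have split: "(\<Sum>a<n. g a) = (\<Sum>a<k. g a) + (\<Sum>a\<in>{k..<n}. g a)" for g :: "nat \<Rightarrow> real"
    using sum.atLeastLessThan_concat[of 0 k n g] assms by (simp add: lessThan_atLeast0)
  have r: "r \<in> {k..<n}"
    using assms by simp
  have "(\<Sum>a<k. meas_entry k r E a a * meas_entry k r Y a a)
      = (\<Sum>a<k. (E $$ (a,a) - partial_trace k E / k) * (Y $$ (a,a) - partial_trace k Y / k))"
    by (simp add: meas_entry_def)
  also have "\<dots> = (\<Sum>a<k. E $$ (a,a) * Y $$ (a,a)) - partial_trace k E * partial_trace k Y / k"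
    unfolding partial_trace_def by (rule sum_centered_mult)
  finally have head: "(\<Sum>a<k. meas_entry k r E a a * meas_entry k r Y a a)
      = (\<Sum>a<k. E $$ (a,a) * Y $$ (a,a)) - partial_trace k E * partial_trace k Y / k" .
  have "(\<Sum>a\<in>{k..<n}. meas_entry k r E a a * meas_entry k r Y a a)
      = (\<Sum>a\<in>{k..<n} - {r}. E $$ (a,a) * Y $$ (a,a))"
    using r by (simp add: sum.remove meas_entry_def)
  also have "\<dots> = (\<Sum>a\<in>{k..<n}. E $$ (a,a) * Y $$ (a,a)) - E $$ (r,r) * Y $$ (r,r)"
    using r by (simp add: sum.remove)
  finally show ?thesis
    unfolding split[of "\<lambda>a. meas_entry k r E a a * meas_entry k r Y a a"] diag_inner_def
      split[of "\<lambda>a. E $$ (a,a) * Y $$ (a,a)"] head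
    by simp
qed

lemma sum_meas_entry:
  "(\<Sum>a<n. \<Sum>b<n. meas_entry k r E a b * meas_entry k r Y a b)
    = (1 + rip_delta k) * offdiag_inner n E Y + (\<Sum>a<n. meas_entry k r E a a * meas_entry k r Y a a)"
proof -
  have weight: "sqrt (1 + rip_delta k) * u * (sqrt (1 + rip_delta k) * v) = (1 + rip_delta k) * (u * v)"
    for u v :: real
  proof -
    have "sqrt (1 + rip_delta k) * u * (sqrt (1 + rip_delta k) * v)
        = (sqrt (1 + rip_delta k) * sqrt (1 + rip_delta k)) * (u * v)"
      by (simp add: mult_ac)
    then show ?thesis
      using rip_delta_bounds[of k] by simp
  qed
  have "(\<Sum>b<n. meas_entry k r E a b * meas_entry k r Y a b)
      = (1 + rip_delta k) * (\<Sum>b<n. if a = b then 0 else E $$ (a,b) * Y $$ (a,b))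
        + meas_entry k r E a a * meas_entry k r Y a a" if "a < n" for a
  proof -
    have "(\<Sum>b<n. meas_entry k r E a b * meas_entry k r Y a b)
        = (\<Sum>b<n. if a = b then 0 else meas_entry k r E a b * meas_entry k r Y a b)
          + meas_entry k r E a a * meas_entry k r Y a a"
      by (rule sum_lessThan_split_diag[OF that])
    also have "(\<Sum>b<n. if a = b then 0 else meas_entry k r E a b * meas_entry k r Y a b)
        = (\<Sum>b<n. (1 + rip_delta k) * (if a = b then 0 else E $$ (a,b) * Y $$ (a,b)))"
      by (intro sum.cong) (auto simp: meas_entry_def weight)
    finally show ?thesis
      by (simp add: sum_distrib_left)
  qed
  then show ?thesis
    by (simp add: offdiag_inner_def sum.distrib sum_distrib_left)
qed

lemma scalar_prod_meas:
  assumes "k \<le> r" and "r < n"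
  shows "meas n k r E \<bullet> meas n k r Y = meas_form n k r E Y"
proof -
  let ?\<delta> = "rip_delta k"
  define x x' y y' where "x = partial_trace k E / sqrt k" and "x' = partial_trace k Y / sqrt k"
    and "y = E $$ (r,r)" and "y' = Y $$ (r,r)"
  have sqrt_sq: "sqrt d * sqrt d = d" if "0 \<le> d" for d :: real
    using that by simp
  have tail: "sqrt ((1 + ?\<delta>) / 2) * (x + y) * (sqrt ((1 + ?\<delta>) / 2) * (x' + y'))
      + sqrt ((1 - ?\<delta>) / 2) * (x - y) * (sqrt ((1 - ?\<delta>) / 2) * (x' - y'))
      = x * x' + y * y' + ?\<delta> * (x * y' + y * x')"
    using sqrt_sq[of "(1 + ?\<delta>) / 2"] sqrt_sq[of "(1 - ?\<delta>) / 2"] rip_delta_bounds[of k]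
    by (simp add: algebra_simps) (simp add: field_simps)
  have xx': "x * x' = partial_trace k E * partial_trace k Y / k"
    by (simp add: x_def x'_def)
  have head: "(\<Sum>i<n*n. meas n k r E $ i * meas n k r Y $ i)
      = (\<Sum>a<n. \<Sum>b<n. meas_entry k r E a b * meas_entry k r Y a b)"
    unfolding sum_lessThan_mult by (simp add: meas_index)
  have last: "meas n k r E $ (n*n) * meas n k r Y $ (n*n)
      + meas n k r E $ Suc (n*n) * meas n k r Y $ Suc (n*n) = x * x' + y * y' + ?\<delta> * (x * y' + y * x')"
    unfolding tail[symmetric] by (simp add: meas_def x_def x'_def y_def y'_def)
  have cross: "?\<delta> * (x * y' + y * x')
      = ?\<delta> * (partial_trace k E * Y $$ (r,r) + E $$ (r,r) * partial_trace k Y) / sqrt k"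
    by (simp add: x_def x'_def y_def y'_def add_divide_distrib distrib_left)
  have "meas n k r E \<bullet> meas n k r Y = (\<Sum>i<n*n. meas n k r E $ i * meas n k r Y $ i)
      + (meas n k r E $ (n*n) * meas n k r Y $ (n*n)
         + meas n k r E $ Suc (n*n) * meas n k r Y $ Suc (n*n))"
    by (simp add: scalar_prod_def lessThan_atLeast0[symmetric] meas_def)
  also have "\<dots> = meas_form n k r E Y"
    unfolding head sum_meas_entry sum_meas_entry_diag[OF assms] last cross xx'
    by (simp add: meas_form_def y_def y'_def)
  finally show ?thesis .
qed

lemma linear_meas_meas:
  assumes "k \<le> r" and "r < n"
  shows "linear_meas n (n*n + 2) (meas n k r)"
proof -
  have div_mod: "i div n < n" "i mod n < n" if "i < n*n" for i
  proof -
    have "0 < n"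
      using that by (cases n) auto
    then show "i div n < n" "i mod n < n"
      using that by (simp_all add: less_mult_imp_div_less)
  qed
  have "meas n k r (E + F) = meas n k r E + meas n k r F"
    if "E \<in> carrier_mat n n" "F \<in> carrier_mat n n" for E F
    using that assms div_mod
    by (intro eq_vecI) (auto simp: meas_def meas_entry_def partial_trace_add algebra_simps add_divide_distrib)
  moreover have "meas n k r (c \<cdot>\<^sub>m E) = c \<cdot>\<^sub>v meas n k r E" if "E \<in> carrier_mat n n" for c E
    using that assms div_mod
    by (intro eq_vecI) (auto simp: meas_def meas_entry_def partial_trace_smult algebra_simps)
  ultimately show ?thesis
    by (simp add: linear_meas_def meas_def)
qed

lemma meas_form_bounds:
  assumes "k \<le> r" and "r < n" and E: "E \<in> carrier_mat n n"
  shows "(1 - rip_delta k) * sqfrob E \<le> meas_form n k r E E"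
    and "meas_form n k r E E \<le> (1 + rip_delta k) * sqfrob E"
proof -
  let ?\<delta> = "rip_delta k"
  define x y where "x = partial_trace k E / sqrt k" and "y = E $$ (r,r)"
  have "x\<^sup>2 \<le> (\<Sum>a<k. (E $$ (a,a))\<^sup>2)"
    using square_sum_div_le_sum_squares[of "\<lambda>a. E $$ (a,a)" k]
    by (simp add: x_def partial_trace_def power_divide)
  moreover have "\<bar>2 * x * y\<bar> \<le> x\<^sup>2 + y\<^sup>2"
    using sum_squares_bound[of "\<bar>x\<bar>" "\<bar>y\<bar>"] by (simp add: abs_mult)
  ultimately have "\<bar>2 * x * y\<bar> \<le> diag_inner n E E"
    using diag_inner_ge[OF assms(1,2), of E] unfolding y_def by linarith
  then have "\<bar>?\<delta> * (2 * x * y)\<bar> \<le> ?\<delta> * diag_inner n E E"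
    using rip_delta_bounds[of k] by (simp add: abs_mult mult_left_mono)
  moreover have "meas_form n k r E E
      = offdiag_inner n E E + diag_inner n E E + ?\<delta> * offdiag_inner n E E + ?\<delta> * (2 * x * y)"
    by (simp add: meas_form_def x_def y_def algebra_simps)
  moreover have "0 \<le> ?\<delta> * offdiag_inner n E E"
    using rip_delta_bounds[of k] by (simp add: offdiag_inner_def sum_nonneg)
  moreover have "(1 + ?\<delta>) * sqfrob E = offdiag_inner n E E + diag_inner n E E
      + ?\<delta> * offdiag_inner n E E + ?\<delta> * diag_inner n E E"
    and "(1 - ?\<delta>) * sqfrob E = offdiag_inner n E E + diag_inner n E E
      - ?\<delta> * offdiag_inner n E E - ?\<delta> * diag_inner n E E"
    unfolding sqfrob_eq_offdiag_diag[OF E] by (simp_all add: algebra_simps)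
  ultimately show "(1 - ?\<delta>) * sqfrob E \<le> meas_form n k r E E"
    and "meas_form n k r E E \<le> (1 + ?\<delta>) * sqfrob E"
    by linarith+
qed

lemma RIP_meas:
  assumes "k \<le> r" and "r < n"
  shows "RIP n (meas n k r) (rip_delta k) p"
  unfolding RIP_def
  using rip_delta_bounds[of k] meas_form_bounds[OF assms]
  by (intro conjI exI[of _ 1]) (simp_all add: sqnorm_vec_eq_scalar_prod scalar_prod_meas[OF assms])

definition id_top :: "nat \<Rightarrow> nat \<Rightarrow> real mat" where
  "id_top n r = mat n r (\<lambda>(i,j). if i = j then 1 else 0)"

lemma id_top_carrier [simp]:
  "id_top n r \<in> carrier_mat n r" "dim_row (id_top n r) = n" "dim_col (id_top n r) = r"
  by (simp_all add: id_top_def)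

lemma id_top_index [simp]: "a < n \<Longrightarrow> b < r \<Longrightarrow> id_top n r $$ (a,b) = (if a = b then 1 else 0)"
  by (simp add: id_top_def)

lemma id_top_mult_transpose_index:
  assumes "V \<in> carrier_mat n r" and "a < n" and "b < n"
  shows "(id_top n r * V\<^sup>T) $$ (a,b) = (if a < r then V $$ (b,a) else 0)"
  using assms by (simp add: id_top_def scalar_prod_def lessThan_atLeast0[symmetric] if_distrib if_distribR cong: if_cong)

lemma mult_transpose_id_top_index:
  assumes "V \<in> carrier_mat n r" and "a < n" and "b < n"
  shows "(V * (id_top n r)\<^sup>T) $$ (a,b) = (if b < r then V $$ (a,b) else 0)"
  using assms by (simp add: id_top_def scalar_prod_def lessThan_atLeast0[symmetric] if_distrib if_distribR cong: if_cong)

definition spike_factor :: "nat \<Rightarrow> nat \<Rightarrow> nat \<Rightarrow> real mat" where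
  "spike_factor n k r = mat n r (\<lambda>(i,j).
     if k \<le> j then (if i = j then 1 else 0) else if i = r then sqrt ((1 + sqrt k) / k) else 0)"

lemma spike_factor_carrier [simp]:
  "spike_factor n k r \<in> carrier_mat n r"
  "dim_row (spike_factor n k r) = n" "dim_col (spike_factor n k r) = r"
  by (simp_all add: spike_factor_def)

lemma spike_factor_gram_index:
  assumes "1 \<le> k" and "k \<le> r" and "a < n" and "b < n"
  shows "(spike_factor n k r * (spike_factor n k r)\<^sup>T) $$ (a,b)
    = (if a = b \<and> k \<le> a \<and> a < r then 1 else 0) + (if a = r \<and> b = r then 1 + sqrt k else 0)"
proof -
  define z where "z i j = (if k \<le> j then (if i = j then 1 else 0)
      else if i = r then sqrt ((1 + sqrt k) / k) else 0)" for i j :: nat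
  have "(spike_factor n k r * (spike_factor n k r)\<^sup>T) $$ (a,b) = (\<Sum>l<r. z a l * z b l)"
    using assms by (simp add: spike_factor_def z_def scalar_prod_def lessThan_atLeast0)
  also have "\<dots> = (\<Sum>l<k. z a l * z b l) + (\<Sum>l\<in>{k..<r}. z a l * z b l)"
    using sum.atLeastLessThan_concat[of 0 k r "\<lambda>l. z a l * z b l"] assms by (simp add: lessThan_atLeast0)
  also have "(\<Sum>l<k. z a l * z b l) = (\<Sum>l<k. if a = r \<and> b = r then (1 + sqrt k) / k else 0)"
    by (intro sum.cong) (auto simp: z_def)
  also have "\<dots> = (if a = r \<and> b = r then 1 + sqrt k else 0)"
    using assms by simp
  also have "(\<Sum>l\<in>{k..<r}. z a l * z b l) = (\<Sum>l\<in>{k..<r}. if l = a then (if a = b then 1 else 0) else 0)"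
    by (intro sum.cong) (auto simp: z_def)
  also have "\<dots> = (if a = b \<and> k \<le> a \<and> a < r then 1 else 0)"
    by simp
  finally show ?thesis
    by simp
qed

lemma spike_residual_index:
  assumes "1 \<le> k" and "k \<le> r" and "r < n" and "a < n" and "b < n"
  shows "(id_top n r * (id_top n r)\<^sup>T - spike_factor n k r * (spike_factor n k r)\<^sup>T) $$ (a,b)
    = (if a \<noteq> b then 0 else if a < k then 1 else if a = r then - (1 + sqrt k) else 0)"
  using assms id_top_mult_transpose_index[OF id_top_carrier(1), of a n b r]
    spike_factor_gram_index[OF assms(1,2,4,5)]
  by simp

lemma id_top_gram_ne_spike_gram:
  assumes "1 \<le> k" and "k \<le> r" and "r < n"
  shows "id_top n r * (id_top n r)\<^sup>T \<noteq> spike_factor n k r * (spike_factor n k r)\<^sup>T"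
proof
  assume "id_top n r * (id_top n r)\<^sup>T = spike_factor n k r * (spike_factor n k r)\<^sup>T"
  then have "(id_top n r * (id_top n r)\<^sup>T - spike_factor n k r * (spike_factor n k r)\<^sup>T) $$ (r,r) = 0"
    using assms by simp
  then show False
    using spike_residual_index[OF assms assms(3) assms(3)] add_pos_nonneg[of 1 "sqrt k"] assms(2)
    by simp
qed

lemma meas_form_spike_residual:
  assumes "1 \<le> k" and "k \<le> r" and "r < n"
  shows "meas_form n k r (id_top n r * (id_top n r)\<^sup>T - spike_factor n k r * (spike_factor n k r)\<^sup>T) Y
    = - (1 + rip_delta k) * Y $$ (r,r)"
proof -
  define E where "E = id_top n r * (id_top n r)\<^sup>T - spike_factor n k r * (spike_factor n k r)\<^sup>T"
  define s where "s = sqrt k"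
  have E: "E $$ (a,b) = (if a \<noteq> b then 0 else if a < k then 1 else if a = r then - (1 + s) else 0)"
    if "a < n" "b < n" for a b
    unfolding E_def s_def using spike_residual_index[OF assms that] .
  have s: "0 < s" "real k = s * s" and \<delta>: "rip_delta k = s / (1 + s)"
    using assms by (simp_all add: s_def rip_delta_def)
  have off: "offdiag_inner n E Y = 0"
    unfolding offdiag_inner_def by (auto intro!: sum.neutral simp: E)
  have "diag_inner n E Y
      = (\<Sum>a<n. (if a < k then Y $$ (a,a) else 0) - (if a = r then (1 + s) * Y $$ (r,r) else 0))"
    unfolding diag_inner_def using assms by (intro sum.cong) (auto simp: E algebra_simps)
  also have "\<dots> = (\<Sum>a<n. if a < k then Y $$ (a,a) else 0) - (1 + s) * Y $$ (r,r)"
    using assms by (simp add: sum_subtractf)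
  also have "(\<Sum>a<n. if a < k then Y $$ (a,a) else 0) = partial_trace k Y"
    using assms by (simp add: sum_lessThan_if_less partial_trace_def)
  finally have diag: "diag_inner n E Y = partial_trace k Y - (1 + s) * Y $$ (r,r)" .
  have trace: "partial_trace k E = s * s" and corner: "E $$ (r,r) = - (1 + s)"
    using assms by (simp_all add: partial_trace_def E flip: s(2))
  have "meas_form n k r E Y
      = partial_trace k Y - (1 + s) * Y $$ (r,r)
        + s / (1 + s) * (s * s * Y $$ (r,r) + - (1 + s) * partial_trace k Y) / s"
    unfolding meas_form_def \<delta> s_def[symmetric] off diag trace corner by simp
  also have "\<dots> = - (1 + s / (1 + s)) * Y $$ (r,r)"
  proof -
    have "s \<noteq> 0" "1 + s \<noteq> 0" "s + s * s \<noteq> 0"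
      using s(1) add_pos_pos[OF s(1) mult_pos_pos[OF s(1) s(1)]] by simp_all
    then show ?thesis
      by (simp add: field_simps)
  qed
  finally show ?thesis
    by (simp add: \<delta> E_def)
qed

lemma id_top_gram_derivative_index:
  assumes "V \<in> carrier_mat n r" and "a < n" and "b < n"
  shows "(id_top n r * V\<^sup>T + V * (id_top n r)\<^sup>T) $$ (a,b)
    = (if a < r then V $$ (b,a) else 0) + (if b < r then V $$ (a,b) else 0)"
  using id_top_mult_transpose_index[OF assms] mult_transpose_id_top_index[OF assms] assms by simp

lemma meas_form_gram_derivative_ge:
  assumes "k \<le> r" and "r < n" and V: "V \<in> carrier_mat n r"
  defines "L \<equiv> id_top n r * V\<^sup>T + V * (id_top n r)\<^sup>T"
  shows "2 * (1 + rip_delta k) * (\<Sum>b<r. (V $$ (r,b))\<^sup>2) \<le> meas_form n k r L L"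
proof -
  have L: "L $$ (a,b) = (if a < r then V $$ (b,a) else 0) + (if b < r then V $$ (a,b) else 0)"
    if "a < n" "b < n" for a b
    unfolding L_def using id_top_gram_derivative_index[OF V that] .
  define g where "g a b = (if a = b then 0 else L $$ (a,b) * L $$ (a,b))" for a b
  have "(\<Sum>b<r. g r b) + (\<Sum>a<r. g a r) \<le> offdiag_inner n L L"
    unfolding offdiag_inner_def g_def using \<open>r < n\<close> by (rule row_col_sum_le_double_sum) simp
  moreover have "(\<Sum>b<r. g r b) = (\<Sum>b<r. (V $$ (r,b))\<^sup>2)" and "(\<Sum>a<r. g a r) = (\<Sum>b<r. (V $$ (r,b))\<^sup>2)"
    using \<open>r < n\<close> by (auto intro!: sum.cong simp: g_def L power2_eq_square)
  ultimately have "(1 + rip_delta k) * (2 * (\<Sum>b<r. (V $$ (r,b))\<^sup>2)) \<le> (1 + rip_delta k) * offdiag_inner n L L"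
    using rip_delta_bounds[of k] by (intro mult_left_mono) auto
  moreover have "L $$ (r,r) = 0"
    using \<open>r < n\<close> by (simp add: L)
  then have "meas_form n k r L L = (1 + rip_delta k) * offdiag_inner n L L + diag_inner n L L"
    by (simp add: meas_form_def)
  moreover have "0 \<le> diag_inner n L L"
    by (simp add: diag_inner_def sum_nonneg)
  ultimately show ?thesis
    by (simp add: algebra_simps)
qed

lemma sec_order_crit_meas:
  assumes "1 \<le> k" and "k \<le> r" and "r < n"
  shows "sec_order_crit n r (meas n k r) (spike_factor n k r) (id_top n r)"
proof (rule sec_order_critI[OF linear_meas_meas[OF assms(2,3)] id_top_carrier(1) spike_factor_carrier(1)])
  fix V :: "real mat" assume V: "V \<in> carrier_mat n r"
  have "(id_top n r * V\<^sup>T + V * (id_top n r)\<^sup>T) $$ (r,r) = 0"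
    using id_top_gram_derivative_index[OF V assms(3) assms(3)] by simp
  moreover have "(V * V\<^sup>T) $$ (r,r) = (\<Sum>b<r. (V $$ (r,b))\<^sup>2)"
    using assms V by (simp add: scalar_prod_def power2_eq_square lessThan_atLeast0)
  ultimately show "meas n k r (id_top n r * (id_top n r)\<^sup>T - spike_factor n k r * (spike_factor n k r)\<^sup>T)
        \<bullet> meas n k r (id_top n r * V\<^sup>T + V * (id_top n r)\<^sup>T) = 0 \<and>
      0 \<le> meas n k r (id_top n r * V\<^sup>T + V * (id_top n r)\<^sup>T)
        \<bullet> meas n k r (id_top n r * V\<^sup>T + V * (id_top n r)\<^sup>T)
        + 2 * (meas n k r (id_top n r * (id_top n r)\<^sup>T - spike_factor n k r * (spike_factor n k r)\<^sup>T)
        \<bullet> meas n k r (V * V\<^sup>T))"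
    unfolding scalar_prod_meas[OF assms(2,3)] meas_form_spike_residual[OF assms]
    using meas_form_gram_derivative_ge[OF assms(2,3) V] by (simp add: algebra_simps)
qed

lemma set_cols_spike_factor:
  assumes "1 \<le> k" and "k \<le> r"
  shows "set (cols (spike_factor n k r))
    = insert (sqrt ((1 + sqrt k) / k) \<cdot>\<^sub>v unit_vec n r) (unit_vec n ` {k..<r})"
proof -
  let ?v = "sqrt ((1 + sqrt k) / k) \<cdot>\<^sub>v (unit_vec n r :: real vec)"
  have col: "col (spike_factor n k r) l = (if k \<le> l then unit_vec n l else ?v)" if "l < r" for l
    using that by (auto simp: spike_factor_def unit_vec_def)
  have "set (cols (spike_factor n k r)) = col (spike_factor n k r) ` ({0..<k} \<union> {k..<r})"
    using assms by (simp add: cols_def ivl_disj_un_two(3))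
  also have "\<dots> = (\<lambda>_. ?v) ` {0..<k} \<union> unit_vec n ` {k..<r}"
    unfolding image_Un using assms by (intro arg_cong2[where f = "(\<union>)"] image_cong) (auto simp: col)
  also have "(\<lambda>_. ?v) ` {0..<k} = {?v}"
    using assms by (simp add: image_constant_conv)
  finally show ?thesis
    by simp
qed

lemma mrank_spike_factor:
  assumes "1 \<le> k" and "k \<le> r" and "r < n"
  shows "mrank (spike_factor n k r) = r - k + 1"
proof -
  interpret vec_space "TYPE(real)" n .
  define c where "c = sqrt ((1 + sqrt k) / k)"
  have "c \<noteq> 0"
    using assms add_pos_nonneg[of 1 "sqrt k"] by (simp add: c_def)
  then have "lin_indpt (set (cols (spike_factor n k r)))"
    and card: "card (set (cols (spike_factor n k r))) = card {k..<r} + 1"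
    unfolding set_cols_spike_factor[OF assms(1,2), folded c_def]
    using assms by (intro lin_indpt_insert_unit_vecs card_insert_unit_vecs; auto)+
  then have "rank (spike_factor n k r) = card (set (cols (spike_factor n k r)))"
    by (intro rank_card_indpt[OF spike_factor_carrier(1)]) (auto simp: maximal_def)
  then show ?thesis
    unfolding mrank_def using card assms by simp
qed

theorem proposition8:
  fixes r rs n :: nat
  assumes "1 \<le> rs" and "rs \<le> r" and "r < n"
  shows "\<exists>X \<in> carrier_mat n r. \<exists>Z \<in> carrier_mat n r.
           mrank Z = rs \<and> X * transpose_mat X \<noteq> Z * transpose_mat Z \<and>
           thr_delta n r X Z \<le> ereal (1 / (1 + 1 / sqrt (real (r - rs + 1))))"
proof -
  define k where "k = r - rs + 1"
  have k: "1 \<le> k" "k \<le> r" "r - k + 1 = rs"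
    using assms by (simp_all add: k_def)
  have "thr_delta n r (id_top n r) (spike_factor n k r) \<le> ereal (rip_delta k)"
    using linear_meas_meas[OF k(2) assms(3)] RIP_meas[OF k(2) assms(3)]
      sec_order_crit_meas[OF k(1,2) assms(3)]
    by (intro thr_delta_le) auto
  moreover have "rip_delta k = 1 / (1 + 1 / sqrt (real (r - rs + 1)))"
    unfolding k_def[symmetric] using k(1) by (simp add: rip_delta_def field_simps)
  ultimately show ?thesis
    using mrank_spike_factor[OF k(1,2) assms(3)] id_top_gram_ne_spike_gram[OF k(1,2) assms(3)] k(3)
    by (intro bexI[of _ "id_top n r"] bexI[of _ "spike_factor n k r"]) auto
qed

end
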